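(* Let $f,g$ be functions on $\mathbb{T}$, $k'\ge0$ and $m\in\mathbb{N}^*=\{1,2,\dots\}$. Then $$\Big\|D^{k'}(f\,\partial_x^mg)-\sum_{l=0}^{m-1}\binom{k'}{l}D^lf\,D^{k'-l}\partial_x^mg\Big\|_{L^2}\lesssim\|f\|_{H^{k'+m}}\|g\|_{H^{\frac12+}}+\|f\|_{H^{(m+\frac12)+}}\|g\|_{H^{k'}}.$$
   Context: $\mathbb{T}=\mathbb{R}/2\pi\mathbb{Z}$; $\|f\|_{H^s}=\|\{(1+n^2)^{s/2}\hat f(n)\}_{n\in\mathbb{Z}}\|_{\ell^2}$. For $r\in\mathbb{R}$, $D^r$ is the Fourier multiplier $\widehat{D^rf}(n)=(in)^r\hat f(n)$. For $q\in\mathbb{R}$, $p\in\mathbb{N}$: $\binom{q}{p}=\frac{q(q-1)\cdots(q-p+1)}{p!}$ for $p\ne0$, $\binom{q}{0}=1$. $s+$ denotes $s+\eta$ for a fixed arbitrarily small $\eta>0$, and $a\lesssim b$ means $a\le Cb$ with $C$ independent of $f,g$. *)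

theory Defs
  imports "HOL-Analysis.Analysis"
begin

text \<open>A (generalized) function on the torus T = R/2piZ is represented by its
Fourier coefficient sequence \<open>a :: int \<Rightarrow> complex\<close>, a n = hat f (n).\<close>

text \<open>Fourier multiplier symbol (i n)^r of D^r, principal branch;
convention (i 0)^0 = 1 (D^0 = id) and (i 0)^r = 0 for r \<noteq> 0.\<close>
definition Dsym :: "real \<Rightarrow> int \<Rightarrow> complex" where
  "Dsym r n = (if r = 0 then 1 else if n = 0 then 0
               else (\<i> * of_int n) powr (complex_of_real r))"

definition Dop :: "real \<Rightarrow> (int \<Rightarrow> complex) \<Rightarrow> (int \<Rightarrow> complex)" where
  "Dop r a = (\<lambda>n. Dsym r n * a n)"

definition dx :: "nat \<Rightarrow> (int \<Rightarrow> complex) \<Rightarrow> (int \<Rightarrow> complex)" where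
  "dx m a = (\<lambda>n. (\<i> * of_int n) ^ m * a n)"

text \<open>Pointwise product of functions = convolution of Fourier coefficients.\<close>
definition fprod :: "(int \<Rightarrow> complex) \<Rightarrow> (int \<Rightarrow> complex) \<Rightarrow> (int \<Rightarrow> complex)" where
  "fprod a b = (\<lambda>n. \<Sum>\<^sub>\<infinity>j. a j * b (n - j))"

definition in_H :: "real \<Rightarrow> (int \<Rightarrow> complex) \<Rightarrow> bool" where
  "in_H s a \<longleftrightarrow> (\<lambda>n. (1 + (real_of_int n)\<^sup>2) powr s * (cmod (a n))\<^sup>2) summable_on UNIV"

definition H_norm :: "real \<Rightarrow> (int \<Rightarrow> complex) \<Rightarrow> real" where
  "H_norm s a = sqrt (\<Sum>\<^sub>\<infinity>n. (1 + (real_of_int n)\<^sup>2) powr s * (cmod (a n))\<^sup>2)"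

end

theory Submission
  imports Defs
begin

(* On the Fourier side the n-th coefficient of the remainder is
   sum_j f(j) g(n - j) K(j, n - j), where
   K(a, b) = (i(a+b))^k (ib)^m - sum_{l<m} (k choose l) (ia)^l (ib)^(k-l) (ib)^m.
   If 2|a| <= |b|, then K(a, b) is (ib)^(k+m) times the Taylor remainder of order m
   of (1 + a/b)^k, so |K| <= C |a|^m |b|^k; otherwise |b| <= 2|a| and every term of K
   is bounded by C <a>^(k+m). Hence the coefficients are dominated by the convolutions
   (<.>^(k+m) |f|) * |g| and (<.>^k |g|) * (<.>^m |f|). Young's inequality
   l^2 * l^1 -> l^2 and the embedding of H^(s+1/2+eta) into the weighted l^1 space
   (Cauchy-Schwarz against sum_n <n>^(-1-2 eta) < oo) then give the estimate. *)

section \<open>The binomial series\<close>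

lemma summable_abs_gchoose_shift_half:
  fixes k :: real
  shows "summable (\<lambda>n. \<bar>k gchoose (n + m)\<bar> * (1/2::real) ^ n)"
proof -
  have "summable (\<lambda>n. (k gchoose n) * (3/4::real) ^ n)"
    using gen_binomial_real[of "3/4" k] by (auto simp: sums_iff)
  from powser_insidea[OF this, of "1/2"]
  have "summable (\<lambda>n. \<bar>k gchoose n\<bar> * (1/2::real) ^ n)"
    by (simp add: abs_mult)
  then have "summable (\<lambda>n. 2 ^ m * (\<bar>k gchoose (n + m)\<bar> * (1/2::real) ^ (n + m)))"
    by (intro summable_mult) (simp add: summable_iff_shift[where f = "\<lambda>n. \<bar>k gchoose n\<bar> * (1/2) ^ n"])
  then show ?thesis
    by (simp add: power_add field_simps)
qed

lemma binomial_taylor_remainder_bound: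
  fixes k :: real and m :: nat
  obtains C where "C \<ge> 0"
    and "\<And>t::real. \<bar>t\<bar> \<le> 1/2 \<Longrightarrow>
           \<bar>(1 + t) powr k - (\<Sum>l<m. (k gchoose l) * t ^ l)\<bar> \<le> C * \<bar>t\<bar> ^ m"
proof -
  note tail = summable_abs_gchoose_shift_half[of k m]
  define C where "C = (\<Sum>n. \<bar>k gchoose (n + m)\<bar> * (1/2::real) ^ n)"
  show thesis
  proof
    show "C \<ge> 0" unfolding C_def using tail by (intro suminf_nonneg) auto
  next
    fix t :: real assume t: "\<bar>t\<bar> \<le> 1/2"
    have term_le: "norm ((k gchoose (n + m)) * t ^ n) \<le> \<bar>k gchoose (n + m)\<bar> * (1/2) ^ n" for n
      using t by (auto simp: abs_mult power_abs intro!: mult_left_mono power_mono)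
    have norm_summable: "summable (\<lambda>n. norm ((k gchoose (n + m)) * t ^ n))"
      by (rule summable_comparison_test[OF _ tail]) (use term_le in auto)
    have "(\<lambda>n. (k gchoose n) * t ^ n) sums (1 + t) powr k"
      using gen_binomial_real[of t k] t by simp
    from sums_split_initial_segment[OF this, of m]
    have "(\<lambda>n. t ^ m * ((k gchoose (n + m)) * t ^ n))
                 sums ((1 + t) powr k - (\<Sum>l<m. (k gchoose l) * t ^ l))"
      by (simp add: power_add ac_simps)
    moreover have "(\<lambda>n. t ^ m * ((k gchoose (n + m)) * t ^ n))
                     sums (t ^ m * (\<Sum>n. (k gchoose (n + m)) * t ^ n))"
      using summable_norm_cancel[OF norm_summable] by (intro sums_mult summable_sums)
    ultimately have remainder: "(1 + t) powr k - (\<Sum>l<m. (k gchoose l) * t ^ l)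
                                  = t ^ m * (\<Sum>n. (k gchoose (n + m)) * t ^ n)"
      using sums_unique2 by blast
    have "\<bar>\<Sum>n. (k gchoose (n + m)) * t ^ n\<bar> \<le> (\<Sum>n. norm ((k gchoose (n + m)) * t ^ n))"
      using summable_norm[OF norm_summable] by simp
    also have "\<dots> \<le> C"
      unfolding C_def by (rule suminf_le[OF term_le norm_summable tail])
    finally show "\<bar>(1 + t) powr k - (\<Sum>l<m. (k gchoose l) * t ^ l)\<bar> \<le> C * \<bar>t\<bar> ^ m"
      unfolding remainder abs_mult power_abs by (metis abs_ge_zero mult.commute mult_left_mono zero_le_power)
  qed
qed

section \<open>The Japanese bracket and Fourier multipliers\<close>

definition jbracket :: "real \<Rightarrow> real \<Rightarrow> real" where
  "jbracket s x = (1 + x\<^sup>2) powr (s / 2)"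

lemma one_plus_square_neq_0 [simp]: "1 + (x::real)\<^sup>2 \<noteq> 0"
  by (smt (verit) zero_le_power2)

lemma jbracket_pos [simp]: "jbracket s x > 0"
  unfolding jbracket_def by (simp add: add_pos_nonneg)

lemma jbracket_nonneg [simp]: "jbracket s x \<ge> 0"
  using jbracket_pos[of s x] by linarith

lemma jbracket_ge_1: "s \<ge> 0 \<Longrightarrow> jbracket s x \<ge> 1"
  unfolding jbracket_def by (simp add: ge_one_powr_ge_zero)

lemma jbracket_0 [simp]: "jbracket 0 x = 1"
  unfolding jbracket_def by (simp add: add_pos_nonneg)

lemma jbracket_uminus [simp]: "jbracket s (- x) = jbracket s x"
  unfolding jbracket_def by simp

lemma jbracket_mult: "jbracket s x * jbracket t x = jbracket (s + t) x"
  unfolding jbracket_def by (simp add: powr_add[symmetric] add_divide_distrib)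

lemma jbracket_squared: "(jbracket s x)\<^sup>2 = (1 + x\<^sup>2) powr s"
  unfolding power2_eq_square[of "jbracket s x"] jbracket_mult by (simp add: jbracket_def)

lemma jbracket_mono_exponent: "s \<le> t \<Longrightarrow> jbracket s x \<le> jbracket t x"
  unfolding jbracket_def by (intro powr_mono) auto

lemma abs_powr_le_jbracket:
  assumes "s \<ge> 0"
  shows "\<bar>x\<bar> powr s \<le> jbracket s x"
proof -
  have "\<bar>x\<bar> \<le> (1 + x\<^sup>2) powr (1/2)"
    by (simp add: powr_half_sqrt add_pos_nonneg real_le_rsqrt)
  then have "\<bar>x\<bar> powr s \<le> ((1 + x\<^sup>2) powr (1/2)) powr s"
    using assms by (intro powr_mono2) auto
  also have "\<dots> = jbracket s x"
    unfolding jbracket_def powr_powr by simp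
  finally show ?thesis .
qed

lemma abs_power_le_jbracket: "\<bar>x\<bar> ^ n \<le> jbracket (real n) x"
  using abs_powr_le_jbracket[of "real n" x]
  by (cases "n = 0") (simp_all add: powr_realpow')

lemma jbracket_le_scaled:
  assumes "s \<ge> 0" "c \<ge> 1" "\<bar>x\<bar> \<le> c * \<bar>y\<bar>"
  shows "jbracket s x \<le> c powr s * jbracket s y"
proof -
  have "x\<^sup>2 \<le> (c * \<bar>y\<bar>)\<^sup>2"
    using assms by (metis abs_ge_zero power2_abs power_mono)
  moreover have "1 \<le> c\<^sup>2"
    using assms by (simp add: one_le_power)
  ultimately have "1 + x\<^sup>2 \<le> c\<^sup>2 * (1 + y\<^sup>2)"
    by (simp add: power_mult_distrib algebra_simps)
  then have "jbracket s x \<le> (c\<^sup>2 * (1 + y\<^sup>2)) powr (s / 2)"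
    unfolding jbracket_def using assms by (intro powr_mono2) auto
  also have "\<dots> = c powr s * jbracket s y"
    using assms by (simp add: jbracket_def powr_mult powr_powr flip: powr_numeral)
  finally show ?thesis .
qed

lemma jbracket_Peetre:
  assumes "s \<ge> 0"
  shows "jbracket s (x + y) \<le> 2 powr (s / 2) * (jbracket s x * jbracket s y)"
proof -
  have "1 + (x + y)\<^sup>2 \<le> 2 * ((1 + x\<^sup>2) * (1 + y\<^sup>2))"
    using sum_squares_bound[of x y] zero_le_power2[of "x * y"]
    by (simp add: power2_eq_square algebra_simps)
  then have "jbracket s (x + y) \<le> (2 * ((1 + x\<^sup>2) * (1 + y\<^sup>2))) powr (s / 2)"
    unfolding jbracket_def using assms by (intro powr_mono2) auto
  also have "\<dots> = 2 powr (s / 2) * (jbracket s x * jbracket s y)"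
    by (simp add: jbracket_def powr_mult)
  finally show ?thesis .
qed

lemma Dsym_nonzero: "n \<noteq> 0 \<Longrightarrow> Dsym r n = (\<i> * of_int n) powr (complex_of_real r)"
  unfolding Dsym_def by simp

lemma Dsym_of_nat: "Dsym (real l) n = (\<i> * of_int n) ^ l"
  unfolding Dsym_def by (auto simp: powr_nat')

lemma Dsym_0 [simp]: "Dsym 0 n = 1"
  by (simp add: Dsym_def)

lemma norm_Dsym_nonzero: "n \<noteq> 0 \<Longrightarrow> norm (Dsym r n) = \<bar>real_of_int n\<bar> powr r"
  by (simp add: Dsym_nonzero norm_powr_real_powr' norm_mult)

lemma norm_Dsym_le:
  assumes "r \<ge> 0"
  shows "norm (Dsym r n) \<le> jbracket r (real_of_int n)"
proof (cases "n = 0")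
  case True
  then show ?thesis using assms jbracket_ge_1[of r] by (simp add: Dsym_def jbracket_nonneg)
next
  case False
  then show ?thesis using assms abs_powr_le_jbracket[of r] by (simp add: norm_Dsym_nonzero)
qed

lemma norm_Dsym_mult_power_le:
  assumes "m \<ge> 1" "r + real m \<ge> 0"
  shows "norm (Dsym r n * (\<i> * of_int n) ^ m) \<le> jbracket (r + real m) (real_of_int n)"
proof (cases "n = 0")
  case True
  then show ?thesis using assms by (simp add: power_0_left jbracket_nonneg)
next
  case False
  then have "norm (Dsym r n * (\<i> * of_int n) ^ m) = \<bar>real_of_int n\<bar> powr (r + real m)"
    by (simp add: norm_Dsym_nonzero norm_mult norm_power powr_add powr_realpow)
  also have "\<dots> \<le> jbracket (r + real m) (real_of_int n)"
    using assms by (intro abs_powr_le_jbracket)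
  finally show ?thesis .
qed

lemma norm_Dsym_mult_Dsym_le_high:
  assumes k: "k \<ge> 0" and m: "m \<ge> 1" and l: "l < m"
    and ab: "\<bar>real_of_int b\<bar> \<le> 2 * \<bar>real_of_int a\<bar>"
  shows "norm (Dsym (real l) a * (Dsym (k - real l) b * (\<i> * of_int b) ^ m))
           \<le> 2 powr (k + real m) * jbracket (k + real m) (real_of_int a)"
proof -
  define x where "x = real_of_int a"
  have "norm (Dsym (k - real l) b * (\<i> * of_int b) ^ m) \<le> jbracket (k - real l + real m) (real_of_int b)"
    using m l k by (intro norm_Dsym_mult_power_le) auto
  also have "\<dots> \<le> 2 powr (k - real l + real m) * jbracket (k - real l + real m) x"
    using ab l k by (intro jbracket_le_scaled) (auto simp: x_def)
  also have "\<dots> \<le> 2 powr (k + real m) * jbracket (k - real l + real m) x"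
    by (intro mult_right_mono powr_mono) auto
  finally have "norm (Dsym (real l) a) * norm (Dsym (k - real l) b * (\<i> * of_int b) ^ m)
                  \<le> jbracket (real l) x * (2 powr (k + real m) * jbracket (k - real l + real m) x)"
    using norm_Dsym_le[of "real l" a] by (intro mult_mono) (auto simp: x_def)
  also have "\<dots> = 2 powr (k + real m) * jbracket (k + real m) x"
    by (simp add: mult.left_commute jbracket_mult)
  finally show ?thesis
    by (simp add: norm_mult x_def)
qed

lemma norm_Dsym_mult_Dsym_le_Peetre:
  assumes "p \<ge> 0" "q + real m \<ge> 0" "p + q \<le> k" "m \<ge> 1"
  shows "norm (Dsym p j * (Dsym q (n - j) * (\<i> * of_int (n - j)) ^ m))
           \<le> 2 powr ((q + real m) / 2) * jbracket (q + real m) (real_of_int n)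
               * jbracket (k + real m) (real_of_int j)"
proof -
  define s where "s = q + real m"
  have "norm (Dsym q (n - j) * (\<i> * of_int (n - j)) ^ m) \<le> jbracket s (real_of_int (n - j))"
    using norm_Dsym_mult_power_le[of m q "n - j"] assms by (simp add: s_def)
  also have "\<dots> \<le> 2 powr (s / 2) * (jbracket s (real_of_int n) * jbracket s (real_of_int j))"
    using jbracket_Peetre[of s "real_of_int n" "- real_of_int j"] assms by (simp add: s_def)
  finally have "norm (Dsym p j) * norm (Dsym q (n - j) * (\<i> * of_int (n - j)) ^ m)
                  \<le> jbracket p (real_of_int j) * (2 powr (s / 2) * (jbracket s (real_of_int n) * jbracket s (real_of_int j)))"
    using norm_Dsym_le[of p j] assms by (intro mult_mono) auto
  also have "\<dots> = 2 powr (s / 2) * jbracket s (real_of_int n) * jbracket (p + s) (real_of_int j)"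
    by (simp add: jbracket_mult[symmetric] mult_ac)
  also have "\<dots> \<le> 2 powr (s / 2) * jbracket s (real_of_int n) * jbracket (k + real m) (real_of_int j)"
    using assms by (intro mult_left_mono jbracket_mono_exponent) (auto simp: s_def)
  finally show ?thesis by (simp add: norm_mult s_def)
qed

section \<open>The commutator symbol\<close>

definition commutator_symbol :: "real \<Rightarrow> nat \<Rightarrow> int \<Rightarrow> int \<Rightarrow> complex" where
  "commutator_symbol k m a b = Dsym k (a + b) * (\<i> * of_int b) ^ m
     - (\<Sum>l<m. complex_of_real (k gchoose l) *
                (Dsym (real l) a * (Dsym (k - real l) b * (\<i> * of_int b) ^ m)))"

lemma norm_commutator_symbol_low_le:
  assumes k: "k \<ge> 0" and "C \<ge> 0"
    and taylor: "\<And>t::real. \<bar>t\<bar> \<le> 1/2 \<Longrightarrow>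
                   \<bar>(1 + t) powr k - (\<Sum>l<m. (k gchoose l) * t ^ l)\<bar> \<le> C * \<bar>t\<bar> ^ m"
    and b: "b \<noteq> 0" and ab: "2 * \<bar>real_of_int a\<bar> \<le> \<bar>real_of_int b\<bar>"
  shows "norm (commutator_symbol k m a b)
           \<le> C * (jbracket (real m) (real_of_int a) * jbracket k (real_of_int b))"
proof -
  define t where "t = real_of_int a / real_of_int b"
  define z where "z = \<i> * complex_of_int b"
  define R where "R = (1 + t) powr k - (\<Sum>l<m. (k gchoose l) * t ^ l)"
  have z: "z \<noteq> 0" using b by (simp add: z_def)
  have t: "\<bar>t\<bar> \<le> 1/2" using ab b by (simp add: t_def abs_divide field_simps)
  then have "a + b \<noteq> 0" using b unfolding t_def by (auto simp: field_simps)
  have ia: "\<i> * complex_of_int a = complex_of_real t * z"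
    using b by (simp add: z_def t_def)
  have iab: "\<i> * complex_of_int (a + b) = complex_of_real (1 + t) * z"
    using b by (simp add: z_def t_def field_simps)
  have "Dsym k (a + b) = (complex_of_real (1 + t) * z) powr complex_of_real k"
    unfolding Dsym_nonzero[OF \<open>a + b \<noteq> 0\<close>] iab ..
  also have "\<dots> = complex_of_real (1 + t) powr complex_of_real k * z powr complex_of_real k"
    using t by (intro powr_times_real_left) auto
  also have "complex_of_real (1 + t) powr complex_of_real k = complex_of_real ((1 + t) powr k)"
    using t by (intro powr_of_real) auto
  moreover have "Dsym (real l) a = complex_of_real t ^ l * z ^ l" for l
    by (simp add: Dsym_of_nat ia power_mult_distrib)
  moreover have "Dsym (k - real l) b = z powr complex_of_real k / z ^ l" for l
    using b z by (simp add: Dsym_nonzero z_def[symmetric] powr_diff powr_nat')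
  ultimately have "commutator_symbol k m a b = z powr complex_of_real k * z ^ m * complex_of_real R"
    unfolding commutator_symbol_def z_def[symmetric] R_def using z
    by (simp add: sum_distrib_left algebra_simps power_mult_distrib)
  then have "norm (commutator_symbol k m a b) = \<bar>real_of_int b\<bar> powr k * \<bar>real_of_int b\<bar> ^ m * \<bar>R\<bar>"
    by (simp add: norm_mult norm_power norm_powr_real_powr' z_def)
  also have "\<dots> \<le> \<bar>real_of_int b\<bar> powr k * \<bar>real_of_int b\<bar> ^ m * (C * \<bar>t\<bar> ^ m)"
    unfolding R_def using taylor[OF t] by (intro mult_left_mono) auto
  also have "\<dots> = C * (\<bar>real_of_int a\<bar> ^ m * \<bar>real_of_int b\<bar> powr k)"
    using b by (simp add: t_def abs_divide power_divide field_simps)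
  also have "\<dots> \<le> C * (jbracket (real m) (real_of_int a) * jbracket k (real_of_int b))"
    using \<open>C \<ge> 0\<close> k
    by (intro mult_left_mono mult_mono abs_power_le_jbracket abs_powr_le_jbracket)
       (auto simp: jbracket_nonneg)
  finally show ?thesis .
qed

lemma norm_commutator_symbol_high_le:
  assumes k: "k \<ge> 0" and m: "m \<ge> 1" and ab: "\<bar>real_of_int b\<bar> \<le> 2 * \<bar>real_of_int a\<bar>"
  shows "norm (commutator_symbol k m a b)
           \<le> (3 powr k * 2 powr real m + (\<Sum>l<m. \<bar>k gchoose l\<bar>) * 2 powr (k + real m))
               * jbracket (k + real m) (real_of_int a)"
proof -
  define x where "x = real_of_int a"
  define y where "y = real_of_int b"
  define z where "z = \<i> * complex_of_int b"
  have yx: "\<bar>y\<bar> \<le> 2 * \<bar>x\<bar>" and xy: "\<bar>x + y\<bar> \<le> 3 * \<bar>x\<bar>"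
    using ab by (auto simp: x_def y_def)
  have "norm (Dsym k (a + b)) \<le> 3 powr k * jbracket k x"
    using norm_Dsym_le[OF k, of "a + b"] jbracket_le_scaled[OF k _ xy] by (simp add: x_def y_def)
  moreover have "\<bar>y\<bar> ^ m \<le> 2 powr real m * jbracket (real m) x"
    using abs_power_le_jbracket[of y m] jbracket_le_scaled[of "real m" 2 y x] yx by simp
  ultimately have "norm (Dsym k (a + b)) * \<bar>y\<bar> ^ m
                     \<le> (3 powr k * jbracket k x) * (2 powr real m * jbracket (real m) x)"
    by (intro mult_mono) auto
  then have leading: "norm (Dsym k (a + b) * z ^ m) \<le> 3 powr k * 2 powr real m * jbracket (k + real m) x"
    by (simp add: norm_mult norm_power z_def y_def jbracket_mult[symmetric] algebra_simps)
  have "norm (commutator_symbol k m a b)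
          \<le> norm (Dsym k (a + b) * z ^ m)
            + (\<Sum>l<m. \<bar>k gchoose l\<bar> * norm (Dsym (real l) a * (Dsym (k - real l) b * z ^ m)))"
    unfolding commutator_symbol_def z_def
    by (intro norm_triangle_le_diff order.trans[OF norm_sum] add_left_mono sum_mono) (simp add: norm_mult)
  also have "\<dots> \<le> 3 powr k * 2 powr real m * jbracket (k + real m) x
                    + (\<Sum>l<m. \<bar>k gchoose l\<bar> * (2 powr (k + real m) * jbracket (k + real m) x))"
    unfolding z_def x_def
    by (intro add_mono leading[unfolded z_def x_def] sum_mono mult_left_mono norm_Dsym_mult_Dsym_le_high k m ab) auto
  finally show ?thesis
    by (simp add: x_def sum_distrib_right[symmetric] distrib_right mult.assoc)
qed

lemma norm_commutator_symbol_le: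
  assumes "k \<ge> 0" "m \<ge> 1"
  obtains C where "C \<ge> 0" and "\<And>a b. norm (commutator_symbol k m a b)
     \<le> C * (jbracket (k + real m) (real_of_int a)
              + jbracket (real m) (real_of_int a) * jbracket k (real_of_int b))"
proof -
  obtain C\<^sub>1 where "C\<^sub>1 \<ge> 0" and taylor: "\<And>t::real. \<bar>t\<bar> \<le> 1/2 \<Longrightarrow>
     \<bar>(1 + t) powr k - (\<Sum>l<m. (k gchoose l) * t ^ l)\<bar> \<le> C\<^sub>1 * \<bar>t\<bar> ^ m"
    using binomial_taylor_remainder_bound[of k m] by blast
  define C\<^sub>2 where "C\<^sub>2 = 3 powr k * 2 powr real m + (\<Sum>l<m. \<bar>k gchoose l\<bar>) * 2 powr (k + real m)"
  have "C\<^sub>2 \<ge> 0"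
    unfolding C\<^sub>2_def by (intro add_nonneg_nonneg mult_nonneg_nonneg sum_nonneg) auto
  show thesis
  proof
    show "C\<^sub>1 + C\<^sub>2 \<ge> 0" using \<open>C\<^sub>1 \<ge> 0\<close> \<open>C\<^sub>2 \<ge> 0\<close> by simp
  next
    fix a b
    define A where "A = jbracket (k + real m) (real_of_int a)"
    define B where "B = jbracket (real m) (real_of_int a) * jbracket k (real_of_int b)"
    have "A \<ge> 0" "B \<ge> 0" unfolding A_def B_def by (simp_all add: jbracket_nonneg)
    consider "b = 0" | "b \<noteq> 0" "2 * \<bar>real_of_int a\<bar> \<le> \<bar>real_of_int b\<bar>"
      | "\<bar>real_of_int b\<bar> \<le> 2 * \<bar>real_of_int a\<bar>"
      by linarith
    then have "norm (commutator_symbol k m a b) \<le> C\<^sub>1 * B \<or> norm (commutator_symbol k m a b) \<le> C\<^sub>2 * A"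
    proof cases
      case 1
      then show ?thesis using assms \<open>C\<^sub>1 \<ge> 0\<close> \<open>B \<ge> 0\<close> by (simp add: commutator_symbol_def power_0_left)
    next
      case 2
      then show ?thesis
        unfolding B_def using norm_commutator_symbol_low_le[OF assms(1) \<open>C\<^sub>1 \<ge> 0\<close> taylor] by blast
    next
      case 3
      then show ?thesis
        unfolding A_def C\<^sub>2_def using norm_commutator_symbol_high_le[OF assms] by blast
    qed
    then show "norm (commutator_symbol k m a b) \<le> (C\<^sub>1 + C\<^sub>2) * (A + B)"
      using \<open>A \<ge> 0\<close> \<open>B \<ge> 0\<close> \<open>C\<^sub>1 \<ge> 0\<close> \<open>C\<^sub>2 \<ge> 0\<close>
      by (smt (verit, best) mult_nonneg_nonneg distrib_left distrib_right)
  qed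
qed

section \<open>Convolution of sequences\<close>

lemma has_sum_sum:
  fixes f :: "'i \<Rightarrow> 'a \<Rightarrow> 'b::topological_comm_monoid_add"
  assumes "finite I" "\<And>i. i \<in> I \<Longrightarrow> (f i has_sum s i) A"
  shows "((\<lambda>x. \<Sum>i\<in>I. f i x) has_sum (\<Sum>i\<in>I. s i)) A"
  using assms by (induction I rule: finite_induct) (simp_all add: has_sum_add)

lemma norm_has_sum_le_infsum:
  fixes S :: "'a \<Rightarrow> 'b::banach"
  assumes "(S has_sum e) A" "B summable_on A" "\<And>x. x \<in> A \<Longrightarrow> norm (S x) \<le> B x"
  shows "norm e \<le> infsum B A"
proof -
  have norms: "(\<lambda>x. norm (S x)) summable_on A"
    by (rule Infinite_Sum.abs_summable_on_comparison_test'[OF assms(2,3)])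
  have "norm e \<le> (\<Sum>\<^sub>\<infinity>x\<in>A. norm (S x))"
    by (rule norm_has_sum_bound[OF has_sum_infsum[OF norms] assms(1)])
  also have "\<dots> \<le> infsum B A"
    by (rule infsum_mono[OF norms assms(2,3)])
  finally show ?thesis .
qed

lemma infsum_Cauchy_Schwarz:
  fixes a b :: "'a \<Rightarrow> real"
  assumes a: "(\<lambda>i. (a i)\<^sup>2) summable_on UNIV" and b: "(\<lambda>i. (b i)\<^sup>2) summable_on UNIV"
  shows "(\<lambda>i. a i * b i) summable_on UNIV"
    and "(\<Sum>\<^sub>\<infinity>i. a i * b i) \<le> sqrt (\<Sum>\<^sub>\<infinity>i. (a i)\<^sup>2) * sqrt (\<Sum>\<^sub>\<infinity>i. (b i)\<^sup>2)"
proof -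
  have "norm (a i * b i) \<le> (a i)\<^sup>2 + (b i)\<^sup>2" for i
  proof -
    have "2 * \<bar>a i\<bar> * \<bar>b i\<bar> \<le> (a i)\<^sup>2 + (b i)\<^sup>2"
      using sum_squares_bound[of "\<bar>a i\<bar>" "\<bar>b i\<bar>"] by simp
    moreover have "0 \<le> \<bar>a i\<bar> * \<bar>b i\<bar>" by simp
    ultimately show ?thesis unfolding real_norm_def abs_mult by linarith
  qed
  then have "(\<lambda>i. norm (a i * b i)) summable_on UNIV"
    by (rule Infinite_Sum.abs_summable_on_comparison_test'[OF summable_on_add[OF a b]])
  then show ab: "(\<lambda>i. a i * b i) summable_on UNIV"
    by (rule abs_summable_summable)
  show "(\<Sum>\<^sub>\<infinity>i. a i * b i) \<le> sqrt (\<Sum>\<^sub>\<infinity>i. (a i)\<^sup>2) * sqrt (\<Sum>\<^sub>\<infinity>i. (b i)\<^sup>2)"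
  proof (rule infsum_le_finite_sums[OF ab])
    fix F :: "'a set" assume "finite F"
    have "(\<Sum>i\<in>F. a i * b i) \<le> sqrt ((\<Sum>i\<in>F. (a i)\<^sup>2) * (\<Sum>i\<in>F. (b i)\<^sup>2))"
      by (intro real_le_rsqrt Cauchy_Schwarz_ineq_sum)
    also have "\<dots> \<le> sqrt ((\<Sum>\<^sub>\<infinity>i. (a i)\<^sup>2) * (\<Sum>\<^sub>\<infinity>i. (b i)\<^sup>2))"
      using \<open>finite F\<close>
      by (intro real_sqrt_le_mono mult_mono finite_sum_le_infsum a b sum_nonneg infsum_nonneg) auto
    finally show "(\<Sum>i\<in>F. a i * b i) \<le> sqrt (\<Sum>\<^sub>\<infinity>i. (a i)\<^sup>2) * sqrt (\<Sum>\<^sub>\<infinity>i. (b i)\<^sup>2)"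
      by (simp add: real_sqrt_mult)
  qed
qed

lemma has_sum_reflect_int:
  "((\<lambda>j. y (n - j)) has_sum S) UNIV \<longleftrightarrow> (y has_sum S) (UNIV :: int set)"
  by (rule has_sum_reindex_bij_witness[of _ "\<lambda>j. n - j" "\<lambda>j. n - j"]) simp_all

lemma has_sum_shift_int:
  "((\<lambda>j. y (j - n)) has_sum S) UNIV \<longleftrightarrow> (y has_sum S) (UNIV :: int set)"
  by (rule has_sum_reindex_bij_witness[of _ "\<lambda>j. j + n" "\<lambda>j. j - n"]) simp_all

definition seq_conv :: "(int \<Rightarrow> real) \<Rightarrow> (int \<Rightarrow> real) \<Rightarrow> int \<Rightarrow> real" where
  "seq_conv x y n = (\<Sum>\<^sub>\<infinity>j. x j * y (n - j))"

lemma seq_conv_commute: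
  shows "(\<lambda>j. x j * y (n - j)) summable_on UNIV \<longleftrightarrow> (\<lambda>j. y j * x (n - j)) summable_on UNIV"
    and "seq_conv x y n = seq_conv y x n"
  unfolding seq_conv_def
  by (rule summable_on_reindex_bij_witness[of _ "\<lambda>j. n - j" "\<lambda>j. n - j"]; simp add: mult.commute)
     (rule infsum_reindex_bij_witness[of _ "\<lambda>j. n - j" "\<lambda>j. n - j"]; simp add: mult.commute)

lemma infsum_seq_conv:
  assumes u: "\<And>i. u i \<ge> 0" "u summable_on UNIV" and y: "\<And>i. y i \<ge> 0" "y summable_on UNIV"
  shows "seq_conv u y summable_on UNIV"
    and "(\<Sum>\<^sub>\<infinity>n. seq_conv u y n) = (\<Sum>\<^sub>\<infinity>i. u i) * (\<Sum>\<^sub>\<infinity>i. y i)"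
proof -
  have rows: "((\<lambda>n. u j * y (n - j)) has_sum u j * (\<Sum>\<^sub>\<infinity>i. y i)) UNIV" for j
    using has_sum_cmult_right[OF has_sum_shift_int[THEN iffD2, OF has_sum_infsum[OF y(2)]]] .
  have "(\<lambda>(j, n). u j * y (n - j)) summable_on UNIV \<times> UNIV"
    using rows summable_on_cmult_left[OF u(2)] u(1) y(1)
    by (intro summable_on_SigmaI[where g = "\<lambda>j. u j * (\<Sum>\<^sub>\<infinity>i. y i)"]) auto
  then have double: "(\<lambda>(n, j). u j * y (n - j)) summable_on UNIV \<times> UNIV"
    by (subst summable_on_swap) (simp add: case_prod_unfold)
  then show "seq_conv u y summable_on UNIV"
    unfolding seq_conv_def by (rule summable_on_Sigma_banach[where f = "\<lambda>n j. u j * y (n - j)"])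
  have "(\<Sum>\<^sub>\<infinity>n. seq_conv u y n) = (\<Sum>\<^sub>\<infinity>j. \<Sum>\<^sub>\<infinity>n. u j * y (n - j))"
    unfolding seq_conv_def by (rule infsum_swap_banach[OF double])
  also have "\<dots> = (\<Sum>\<^sub>\<infinity>j. u j * (\<Sum>\<^sub>\<infinity>i. y i))"
    by (rule infsum_cong) (rule infsumI[OF rows])
  finally show "(\<Sum>\<^sub>\<infinity>n. seq_conv u y n) = (\<Sum>\<^sub>\<infinity>i. u i) * (\<Sum>\<^sub>\<infinity>i. y i)"
    by (simp add: infsum_cmult_left[OF u(2)])
qed

lemma seq_conv_square_le:
  assumes x: "\<And>i. x i \<ge> 0" "(\<lambda>i. (x i)\<^sup>2) summable_on UNIV"
    and y: "\<And>i. y i \<ge> 0" "y summable_on UNIV"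
  shows "(\<lambda>j. x j * y (n - j)) summable_on UNIV"
    and "(seq_conv x y n)\<^sup>2 \<le> seq_conv (\<lambda>i. (x i)\<^sup>2) y n * (\<Sum>\<^sub>\<infinity>i. y i)"
proof -
  define a where "a j = x j * sqrt (y (n - j))" for j
  define b where "b j = sqrt (y (n - j))" for j
  have y_le: "y i \<le> (\<Sum>\<^sub>\<infinity>i. y i)" for i
    using finite_sum_le_infsum[OF y(2), of "{i}"] y(1) by simp
  have "(\<lambda>j. (x j)\<^sup>2 * y (n - j)) summable_on UNIV"
    by (rule summable_on_comparison_test[OF summable_on_cmult_left[OF x(2), of "\<Sum>\<^sub>\<infinity>i. y i"]])
       (auto intro: mult_left_mono mult_nonneg_nonneg y_le y(1))
  moreover have "(\<lambda>j. y (n - j)) summable_on UNIV"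
    using has_sum_reflect_int[THEN iffD2, OF has_sum_infsum[OF y(2)]] by (rule has_sum_imp_summable)
  ultimately have a2: "(\<lambda>j. (a j)\<^sup>2) summable_on UNIV" and b2: "(\<lambda>j. (b j)\<^sup>2) summable_on UNIV"
    using y(1) by (simp_all add: a_def b_def power_mult_distrib)
  have ab: "a j * b j = x j * y (n - j)" for j
    using y(1) by (simp add: a_def b_def mult.assoc)
  then show "(\<lambda>j. x j * y (n - j)) summable_on UNIV"
    using infsum_Cauchy_Schwarz(1)[OF a2 b2] by simp
  have "seq_conv x y n \<le> sqrt (\<Sum>\<^sub>\<infinity>j. (a j)\<^sup>2) * sqrt (\<Sum>\<^sub>\<infinity>j. (b j)\<^sup>2)"
    using infsum_Cauchy_Schwarz(2)[OF a2 b2] by (simp add: ab seq_conv_def)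
  moreover have "seq_conv x y n \<ge> 0"
    unfolding seq_conv_def using x(1) y(1) by (intro infsum_nonneg mult_nonneg_nonneg)
  ultimately have "(seq_conv x y n)\<^sup>2 \<le> (sqrt (\<Sum>\<^sub>\<infinity>j. (a j)\<^sup>2) * sqrt (\<Sum>\<^sub>\<infinity>j. (b j)\<^sup>2))\<^sup>2"
    by (rule power_mono)
  also have "\<dots> = (\<Sum>\<^sub>\<infinity>j. (a j)\<^sup>2) * (\<Sum>\<^sub>\<infinity>j. (b j)\<^sup>2)"
    by (simp add: power_mult_distrib infsum_nonneg)
  also have "(\<Sum>\<^sub>\<infinity>j. (b j)\<^sup>2) = (\<Sum>\<^sub>\<infinity>i. y i)"
    using y(1) infsumI[OF has_sum_reflect_int[THEN iffD2, OF has_sum_infsum[OF y(2)]]]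
    by (simp add: b_def)
  finally show "(seq_conv x y n)\<^sup>2 \<le> seq_conv (\<lambda>i. (x i)\<^sup>2) y n * (\<Sum>\<^sub>\<infinity>i. y i)"
    using y(1) by (simp add: a_def seq_conv_def power_mult_distrib)
qed

lemma seq_conv_Young:
  assumes x: "\<And>i. x i \<ge> 0" "(\<lambda>i. (x i)\<^sup>2) summable_on UNIV"
    and y: "\<And>i. y i \<ge> 0" "y summable_on UNIV"
  shows "(\<lambda>n. (seq_conv x y n)\<^sup>2) summable_on UNIV"
    and "(\<Sum>\<^sub>\<infinity>n. (seq_conv x y n)\<^sup>2) \<le> (\<Sum>\<^sub>\<infinity>i. (x i)\<^sup>2) * (\<Sum>\<^sub>\<infinity>i. y i)\<^sup>2"
proof -
  note pointwise = seq_conv_square_le(2)[OF x y]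
  note squares = infsum_seq_conv[of "\<lambda>i. (x i)\<^sup>2", OF _ x(2) y]
  have dominant: "(\<lambda>n. seq_conv (\<lambda>i. (x i)\<^sup>2) y n * (\<Sum>\<^sub>\<infinity>i. y i)) summable_on UNIV"
    using squares(1) by (rule summable_on_cmult_left) simp
  show "(\<lambda>n. (seq_conv x y n)\<^sup>2) summable_on UNIV"
    by (rule summable_on_comparison_test[OF dominant pointwise]) simp
  have "(\<Sum>\<^sub>\<infinity>n. (seq_conv x y n)\<^sup>2) \<le> (\<Sum>\<^sub>\<infinity>n. seq_conv (\<lambda>i. (x i)\<^sup>2) y n * (\<Sum>\<^sub>\<infinity>i. y i))"
    by (rule infsum_mono[OF _ dominant pointwise]) fact
  also have "\<dots> = (\<Sum>\<^sub>\<infinity>i. (x i)\<^sup>2) * (\<Sum>\<^sub>\<infinity>i. y i)\<^sup>2"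
    using squares by (simp add: infsum_cmult_left power2_eq_square)
  finally show "(\<Sum>\<^sub>\<infinity>n. (seq_conv x y n)\<^sup>2) \<le> (\<Sum>\<^sub>\<infinity>i. (x i)\<^sup>2) * (\<Sum>\<^sub>\<infinity>i. y i)\<^sup>2" .
qed

section \<open>Sobolev norms\<close>

lemma summable_jbracket_square_neg:
  assumes "\<eta> > 0"
  shows "(\<lambda>n::int. (jbracket (-(1/2 + \<eta>)) (real_of_int n))\<^sup>2) summable_on UNIV"
proof -
  define w where "w x = (1 + x\<^sup>2) powr (-(1/2 + \<eta>))" for x :: real
  have "summable (\<lambda>n::nat. w (real n))"
  proof (rule summable_comparison_test')
    show "summable (\<lambda>n::nat. real n powr (-(1 + 2 * \<eta>)))"
      using assms by (subst summable_real_powr_iff) auto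
    fix n :: nat assume "n \<ge> 1"
    then have "w (real n) \<le> ((real n)\<^sup>2) powr (-(1/2 + \<eta>))"
      unfolding w_def using assms by (intro powr_mono2') auto
    also have "\<dots> = real n powr (-(1 + 2 * \<eta>))"
      using \<open>n \<ge> 1\<close> by (simp add: powr_powr flip: powr_numeral)
    finally show "norm (w (real n)) \<le> real n powr (-(1 + 2 * \<eta>))"
      by (simp add: w_def)
  qed
  then have nat: "(\<lambda>n::nat. w (real n)) summable_on UNIV"
    by (subst summable_on_UNIV_nonneg_real_iff) (auto simp: w_def)
  have "(\<lambda>n. w (real_of_int n)) summable_on (int ` UNIV \<union> uminus ` int ` UNIV)"
    using nat
    by (intro summable_on_union) (simp_all add: summable_on_reindex inj_on_def o_def w_def)
  moreover have "i \<in> int ` UNIV \<union> uminus ` int ` UNIV" for i :: int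
    by (cases "i \<ge> 0") (auto simp: image_iff intro: exI[of _ "nat i"] exI[of _ "nat (- i)"])
  then have "int ` UNIV \<union> uminus ` int ` UNIV = UNIV"
    by blast
  ultimately show ?thesis
    by (simp add: jbracket_squared w_def)
qed

lemma in_H_iff_jbracket:
  "in_H s a \<longleftrightarrow> (\<lambda>n. (jbracket s (real_of_int n) * cmod (a n))\<^sup>2) summable_on UNIV"
  unfolding in_H_def by (simp add: power_mult_distrib jbracket_squared)

lemma H_norm_jbracket:
  "H_norm s a = sqrt (\<Sum>\<^sub>\<infinity>n. (jbracket s (real_of_int n) * cmod (a n))\<^sup>2)"
  unfolding H_norm_def by (simp add: power_mult_distrib jbracket_squared)

lemma H_norm_nonneg: "H_norm s a \<ge> 0"
  unfolding H_norm_def by (intro real_sqrt_ge_zero infsum_nonneg) auto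

definition sobolev_const :: "real \<Rightarrow> real" where
  "sobolev_const \<eta> = sqrt (\<Sum>\<^sub>\<infinity>n::int. (jbracket (-(1/2 + \<eta>)) (real_of_int n))\<^sup>2)"

lemma weighted_l1_le_H_norm:
  assumes "\<eta> > 0" "in_H (r + 1/2 + \<eta>) c"
  shows "(\<lambda>n. jbracket r (real_of_int n) * cmod (c n)) summable_on UNIV"
    and "(\<Sum>\<^sub>\<infinity>n. jbracket r (real_of_int n) * cmod (c n)) \<le> sobolev_const \<eta> * H_norm (r + 1/2 + \<eta>) c"
proof -
  have split: "jbracket r x * cmod (c n) = jbracket (-(1/2 + \<eta>)) x * (jbracket (r + 1/2 + \<eta>) x * cmod (c n))"
    for x n by (simp add: mult.assoc[symmetric] jbracket_mult)
  note CS = infsum_Cauchy_Schwarz[OF summable_jbracket_square_neg[OF assms(1)] assms(2)[unfolded in_H_iff_jbracket]]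
  show "(\<lambda>n. jbracket r (real_of_int n) * cmod (c n)) summable_on UNIV"
    using CS(1) by (simp only: split)
  show "(\<Sum>\<^sub>\<infinity>n. jbracket r (real_of_int n) * cmod (c n)) \<le> sobolev_const \<eta> * H_norm (r + 1/2 + \<eta>) c"
    using CS(2) by (simp only: split sobolev_const_def H_norm_jbracket)
qed

lemma seq_conv_H_norm_le:
  fixes f g :: "int \<Rightarrow> complex"
  assumes "\<eta> > 0" "in_H r f" "in_H (s + 1/2 + \<eta>) g"
  defines "F \<equiv> \<lambda>j. jbracket r (real_of_int j) * cmod (f j)"
    and "G \<equiv> \<lambda>j. jbracket s (real_of_int j) * cmod (g j)"
  shows "(\<lambda>j. F j * G (n - j)) summable_on UNIV"
    and "(\<lambda>n. (seq_conv F G n)\<^sup>2) summable_on UNIV"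
    and "sqrt (\<Sum>\<^sub>\<infinity>n. (seq_conv F G n)\<^sup>2) \<le> sobolev_const \<eta> * H_norm r f * H_norm (s + 1/2 + \<eta>) g"
proof -
  have F: "\<And>j. F j \<ge> 0" "(\<lambda>j. (F j)\<^sup>2) summable_on UNIV"
    using assms(2) by (simp_all add: F_def in_H_iff_jbracket)
  have G: "\<And>j. G j \<ge> 0" "G summable_on UNIV"
    using weighted_l1_le_H_norm(1)[OF assms(1,3)] by (simp_all add: G_def)
  show "(\<lambda>j. F j * G (n - j)) summable_on UNIV"
    by (rule seq_conv_square_le(1)[OF F G])
  show "(\<lambda>n. (seq_conv F G n)\<^sup>2) summable_on UNIV"
    by (rule seq_conv_Young(1)[OF F G])
  have "sqrt (\<Sum>\<^sub>\<infinity>n. (seq_conv F G n)\<^sup>2) \<le> sqrt ((\<Sum>\<^sub>\<infinity>j. (F j)\<^sup>2) * (\<Sum>\<^sub>\<infinity>j. G j)\<^sup>2)"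
    by (rule real_sqrt_le_mono[OF seq_conv_Young(2)[OF F G]])
  also have "\<dots> = H_norm r f * (\<Sum>\<^sub>\<infinity>j. G j)"
    using G(1) by (simp add: real_sqrt_mult H_norm_jbracket F_def infsum_nonneg)
  also have "\<dots> \<le> H_norm r f * (sobolev_const \<eta> * H_norm (s + 1/2 + \<eta>) g)"
    using weighted_l1_le_H_norm(2)[OF assms(1,3)] by (intro mult_left_mono H_norm_nonneg) (simp add: G_def)
  finally show "sqrt (\<Sum>\<^sub>\<infinity>n. (seq_conv F G n)\<^sup>2) \<le> sobolev_const \<eta> * H_norm r f * H_norm (s + 1/2 + \<eta>) g"
    by (simp add: mult_ac)
qed

lemma H_norm_0_le_of_pointwise_le:
  fixes E :: "int \<Rightarrow> complex" and c d :: "int \<Rightarrow> real"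
  assumes "C \<ge> 0" and E: "\<And>n. norm (E n) \<le> C * (c n + d n)"
    and c: "(\<lambda>n. (c n)\<^sup>2) summable_on UNIV" "sqrt (\<Sum>\<^sub>\<infinity>n. (c n)\<^sup>2) \<le> A"
    and d: "(\<lambda>n. (d n)\<^sup>2) summable_on UNIV" "sqrt (\<Sum>\<^sub>\<infinity>n. (d n)\<^sup>2) \<le> B"
  shows "in_H 0 E" and "H_norm 0 E \<le> sqrt 2 * C * (A + B)"
proof -
  have E2: "(norm (E n))\<^sup>2 \<le> 2 * C\<^sup>2 * ((c n)\<^sup>2 + (d n)\<^sup>2)" for n
  proof -
    have "(norm (E n))\<^sup>2 \<le> C\<^sup>2 * (c n + d n)\<^sup>2"
      using power_mono[OF E[of n] norm_ge_zero, of 2] by (simp add: power_mult_distrib)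
    also have "\<dots> \<le> C\<^sup>2 * (2 * ((c n)\<^sup>2 + (d n)\<^sup>2))"
      using sum_squares_bound[of "c n" "d n"] by (intro mult_left_mono) (auto simp: power2_eq_square algebra_simps)
    finally show ?thesis by (simp add: algebra_simps)
  qed
  have cd: "(\<lambda>n. 2 * C\<^sup>2 * ((c n)\<^sup>2 + (d n)\<^sup>2)) summable_on UNIV"
    by (intro summable_on_cmult_right summable_on_add c d)
  have E_summable: "(\<lambda>n. (norm (E n))\<^sup>2) summable_on UNIV"
    by (rule summable_on_comparison_test[OF cd E2]) simp
  then show "in_H 0 E"
    by (simp add: in_H_iff_jbracket)
  have "A \<ge> 0" "B \<ge> 0"
    using c(2) d(2) real_sqrt_ge_zero[OF infsum_nonneg] by (meson order.trans zero_le_power2)+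
  have c_le: "(\<Sum>\<^sub>\<infinity>n. (c n)\<^sup>2) \<le> A\<^sup>2" and d_le: "(\<Sum>\<^sub>\<infinity>n. (d n)\<^sup>2) \<le> B\<^sup>2"
    using c(2) d(2) by (simp_all add: sqrt_le_D)
  have "(\<Sum>\<^sub>\<infinity>n. (norm (E n))\<^sup>2) \<le> (\<Sum>\<^sub>\<infinity>n. 2 * C\<^sup>2 * ((c n)\<^sup>2 + (d n)\<^sup>2))"
    by (rule infsum_mono[OF E_summable cd E2])
  also have "\<dots> = 2 * C\<^sup>2 * ((\<Sum>\<^sub>\<infinity>n. (c n)\<^sup>2) + (\<Sum>\<^sub>\<infinity>n. (d n)\<^sup>2))"
    by (simp add: infsum_cmult_right[OF summable_on_add[OF c(1) d(1)]] infsum_add[OF c(1) d(1)])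
  also have "\<dots> \<le> 2 * C\<^sup>2 * (A\<^sup>2 + B\<^sup>2)"
    using c_le d_le by (intro mult_left_mono add_mono) auto
  also have "\<dots> \<le> (sqrt 2 * C * (A + B))\<^sup>2"
    using \<open>A \<ge> 0\<close> \<open>B \<ge> 0\<close> by (simp add: power_mult_distrib power2_eq_square algebra_simps)
  finally show "H_norm 0 E \<le> sqrt 2 * C * (A + B)"
    using \<open>C \<ge> 0\<close> \<open>A \<ge> 0\<close> \<open>B \<ge> 0\<close> by (simp add: H_norm_jbracket real_le_lsqrt)
qed

definition commutator_remainder ::
    "real \<Rightarrow> nat \<Rightarrow> (int \<Rightarrow> complex) \<Rightarrow> (int \<Rightarrow> complex) \<Rightarrow> int \<Rightarrow> complex" where
  "commutator_remainder k m f g n = Dop k (fprod f (dx m g)) n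
     - (\<Sum>l<m. complex_of_real (k gchoose l) * fprod (Dop (real l) f) (Dop (k - real l) (dx m g)) n)"

lemma commutator_remainder_has_sum:
  assumes k: "k \<ge> 0" and m: "m \<ge> 1"
    and summable: "(\<lambda>j. jbracket (k + real m) (real_of_int j) * cmod (f j) * cmod (g (n - j))) summable_on UNIV"
  shows "((\<lambda>j. f j * g (n - j) * commutator_symbol k m j (n - j)) has_sum commutator_remainder k m f g n) UNIV"
proof -
  define T where "T p q j = Dsym p j * f j * (Dsym q (n - j) * dx m g (n - j))" for p q j
  define c where "c l = complex_of_real (k gchoose l)" for l
  have T_summable: "T p q summable_on UNIV" if pq: "p \<ge> 0" "q + real m \<ge> 0" "p + q \<le> k" for p q
  proof (rule abs_summable_summable, rule Infinite_Sum.abs_summable_on_comparison_test')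
    define M where "M = 2 powr ((q + real m) / 2) * jbracket (q + real m) (real_of_int n)"
    show "(\<lambda>j. M * (jbracket (k + real m) (real_of_int j) * cmod (f j) * cmod (g (n - j)))) summable_on UNIV"
      using summable by (rule summable_on_cmult_right)
    fix j
    have "norm (T p q j) = norm (Dsym p j * (Dsym q (n - j) * (\<i> * of_int (n - j)) ^ m))
                            * (cmod (f j) * cmod (g (n - j)))"
      by (simp add: T_def dx_def norm_mult mult_ac)
    also have "\<dots> \<le> M * jbracket (k + real m) (real_of_int j) * (cmod (f j) * cmod (g (n - j)))"
      unfolding M_def by (intro mult_right_mono norm_Dsym_mult_Dsym_le_Peetre pq m) simp
    finally show "norm (T p q j) \<le> M * (jbracket (k + real m) (real_of_int j) * cmod (f j) * cmod (g (n - j)))"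
      by (simp add: mult_ac)
  qed
  have "((\<lambda>j. Dsym k n * T 0 0 j + (\<Sum>l<m. - c l * T l (k - l) j))
          has_sum (Dsym k n * infsum (T 0 0) UNIV + (\<Sum>l<m. - c l * infsum (T l (k - l)) UNIV))) UNIV"
    using k by (intro has_sum_add has_sum_sum has_sum_cmult_right has_sum_infsum T_summable) auto
  moreover have "Dsym k n * infsum (T 0 0) UNIV + (\<Sum>l<m. - c l * infsum (T l (k - l)) UNIV)
                   = commutator_remainder k m f g n"
    by (simp add: commutator_remainder_def Dop_def fprod_def T_def[abs_def] c_def sum_negf)
  moreover have "Dsym k n * T 0 0 j + (\<Sum>l<m. - c l * T l (k - l) j)
                   = f j * g (n - j) * commutator_symbol k m j (n - j)" for j
  proof -
    define w where "w = (\<i> * of_int (n - j)) ^ m"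
    show ?thesis
      unfolding T_def c_def dx_def commutator_symbol_def w_def[symmetric]
      by (simp add: sum_distrib_left sum_negf algebra_simps)
  qed
  ultimately show ?thesis
    by simp
qed

lemma norm_commutator_remainder_le:
  fixes f g :: "int \<Rightarrow> complex"
  assumes "k \<ge> 0" "m \<ge> 1"
    and symbol: "\<And>a b. norm (commutator_symbol k m a b) \<le> C * (jbracket (k + real m) (real_of_int a)
                          + jbracket (real m) (real_of_int a) * jbracket k (real_of_int b))"
  defines "F\<^sub>1 \<equiv> \<lambda>j. jbracket (k + real m) (real_of_int j) * cmod (f j)"
    and "F\<^sub>2 \<equiv> \<lambda>j. jbracket (real m) (real_of_int j) * cmod (f j)"
    and "G\<^sub>1 \<equiv> \<lambda>j. cmod (g j)"
    and "G\<^sub>2 \<equiv> \<lambda>j. jbracket k (real_of_int j) * cmod (g j)"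
  assumes low: "(\<lambda>j. F\<^sub>1 j * G\<^sub>1 (n - j)) summable_on UNIV"
    and high: "(\<lambda>j. G\<^sub>2 j * F\<^sub>2 (n - j)) summable_on UNIV"
  shows "norm (commutator_remainder k m f g n) \<le> C * (seq_conv F\<^sub>1 G\<^sub>1 n + seq_conv G\<^sub>2 F\<^sub>2 n)"
proof -
  have summable: "(\<lambda>j. F\<^sub>1 j * G\<^sub>1 (n - j)) summable_on UNIV" "(\<lambda>j. F\<^sub>2 j * G\<^sub>2 (n - j)) summable_on UNIV"
    using low high seq_conv_commute(1) by blast+
  define B where "B j = C * (F\<^sub>1 j * G\<^sub>1 (n - j)) + C * (F\<^sub>2 j * G\<^sub>2 (n - j))" for j
  have "norm (commutator_remainder k m f g n) \<le> (\<Sum>\<^sub>\<infinity>j. B j)"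
  proof (rule norm_has_sum_le_infsum[OF commutator_remainder_has_sum[OF assms(1,2)]])
    show "(\<lambda>j. jbracket (k + real m) (real_of_int j) * cmod (f j) * cmod (g (n - j))) summable_on UNIV"
      using summable(1) by (simp add: F\<^sub>1_def G\<^sub>1_def)
    show "B summable_on UNIV"
      unfolding B_def by (intro summable_on_add summable_on_cmult_right summable)
    fix j
    have "norm (f j * g (n - j) * commutator_symbol k m j (n - j))
            \<le> cmod (f j) * cmod (g (n - j)) * (C * (jbracket (k + real m) (real_of_int j)
                 + jbracket (real m) (real_of_int j) * jbracket k (real_of_int (n - j))))"
      unfolding norm_mult by (intro mult_left_mono symbol) simp
    also have "\<dots> = B j"
      by (simp add: B_def F\<^sub>1_def F\<^sub>2_def G\<^sub>1_def G\<^sub>2_def algebra_simps)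
    finally show "norm (f j * g (n - j) * commutator_symbol k m j (n - j)) \<le> B j" .
  qed
  also have "(\<Sum>\<^sub>\<infinity>j. B j) = C * (seq_conv F\<^sub>1 G\<^sub>1 n + seq_conv F\<^sub>2 G\<^sub>2 n)"
    unfolding B_def seq_conv_def using summable
    by (simp add: infsum_add summable_on_cmult_right infsum_cmult_right distrib_left)
  also have "seq_conv F\<^sub>2 G\<^sub>2 n = seq_conv G\<^sub>2 F\<^sub>2 n"
    by (rule seq_conv_commute(2))
  finally show ?thesis .
qed

lemma commutator_remainder_estimate:
  assumes "k \<ge> 0" "m \<ge> 1" "\<eta> > 0"
  shows "\<exists>C. \<forall>f g. in_H (k + real m) f \<and> in_H (real m + 1/2 + \<eta>) f \<and>
      in_H (1/2 + \<eta>) g \<and> in_H k g \<longrightarrow>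
      in_H 0 (commutator_remainder k m f g) \<and>
      H_norm 0 (commutator_remainder k m f g)
        \<le> C * (H_norm (k + real m) f * H_norm (1/2 + \<eta>) g + H_norm (real m + 1/2 + \<eta>) f * H_norm k g)"
proof -
  obtain C where "C \<ge> 0" and symbol: "\<And>a b. norm (commutator_symbol k m a b)
     \<le> C * (jbracket (k + real m) (real_of_int a)
            + jbracket (real m) (real_of_int a) * jbracket k (real_of_int b))"
    using norm_commutator_symbol_le[OF assms(1,2)] by blast
  show ?thesis
  proof (intro exI[of _ "sqrt 2 * C * sobolev_const \<eta>"] allI impI)
    fix f g :: "int \<Rightarrow> complex"
    assume "in_H (k + real m) f \<and> in_H (real m + 1/2 + \<eta>) f \<and> in_H (1/2 + \<eta>) g \<and> in_H k g"
    then have "in_H (k + real m) f" "in_H (0 + 1/2 + \<eta>) g" "in_H k g" "in_H (real m + 1/2 + \<eta>) f"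
      by simp_all
    note low = seq_conv_H_norm_le[OF assms(3) this(1,2), simplified]
      and high = seq_conv_H_norm_le[OF assms(3) this(3,4)]
    note pointwise = norm_commutator_remainder_le[OF assms(1,2) symbol low(1) high(1)]
    note bound = H_norm_0_le_of_pointwise_le[OF \<open>C \<ge> 0\<close> pointwise low(2,3) high(2,3)]
    then show "in_H 0 (commutator_remainder k m f g) \<and>
      H_norm 0 (commutator_remainder k m f g)
        \<le> sqrt 2 * C * sobolev_const \<eta> *
           (H_norm (k + real m) f * H_norm (1/2 + \<eta>) g + H_norm (real m + 1/2 + \<eta>) f * H_norm k g)"
      by (simp add: algebra_simps)
  qed
qed

theorem lemma3:
  fixes k' \<eta> :: real and m :: nat
  assumes "k' \<ge> 0" and "m \<ge> 1" and "\<eta> > 0"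
  shows "\<exists>C. \<forall>f g :: int \<Rightarrow> complex.
     in_H (k' + real m) f \<and> in_H (real m + 1/2 + \<eta>) f \<and>
     in_H (1/2 + \<eta>) g \<and> in_H k' g \<longrightarrow>
     (let E = (\<lambda>n. Dop k' (fprod f (dx m g)) n
                 - (\<Sum>l<m. complex_of_real (k' gchoose l) *
                      fprod (Dop (real l) f) (Dop (k' - real l) (dx m g)) n))
      in in_H 0 E \<and>
         H_norm 0 E \<le> C * (H_norm (k' + real m) f * H_norm (1/2 + \<eta>) g
                          + H_norm (real m + 1/2 + \<eta>) f * H_norm k' g))"
  unfolding Let_def commutator_remainder_def[symmetric]
  by (rule commutator_remainder_estimate[OF assms])

end
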